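(* Let $F$ be an $L$-layer MLP as described in the context, trained with the cross-entropy loss $\mathcal{L}$ by gradient ascent with iterations $t$, and suppose that along this trajectory the logit gradient stays bounded away from zero, i.e. $\|\nabla_z\mathcal{L}(t)\|\ge c>0$ for some constant $c$ and all large $t$. Suppose the logits satisfy $\|z(t)\|\to\infty$. Then: (i) if there is a constant $C_1>0$ with $\|a_{L-1}(t)\|\le C_1$ for all large $t$, it follows that $\|W_L(t)\|\to\infty$; (ii) if there is no such bound on $\|a_{L-1}(t)\|$, there exists a subsequence of iterations $t_k$ such that $\|\nabla_{W_L}\mathcal{L}(t_k)\|\to\infty$.
   Context: An $L$-layer MLP $F$ with input $x$: $a_0=x$; for $1\le l\le L-1$, $h_l=W_la_{l-1}$ and $a_l=\sigma(h_l)$, where $W_l\in\mathbb{R}^{d_l\times d_{l-1}}$ (biases are absorbed into the weights by appending a constant coordinate $1$ to $a_{l-1}$) and $\sigma$ is an activation with $|\sigma'(s)|\le C$ for all $s\in\mathbb{R}$; the logits are $z=W_La_{L-1}\in\mathbb{R}^C$ and the output is $p=\mathrm{softmax}(z)$. The cross-entropy loss for class label $y$ is $\mathcal{L}=-\log(p_y)$, so $\nabla_z\mathcal{L}=p-e_y$ with $e_y$ the $y$-th standard basis vector, and by the chain rule $\nabla_{W_L}\mathcal{L}=(\nabla_z\mathcal{L})\,a_{L-1}^T$. Quantities at iteration $t$ of gradient ascent (parameters updated by adding a positive multiple of the gradient) are written with argument $(t)$. For vectors $\|\cdot\|$ is the Euclidean norm; for matrices it is the operator norm (largest singular value). *)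

theory Defs
  imports "HOL-Analysis.Analysis"
begin

text \<open>Vectors are functions nat => real with an explicit length n (only indices < n matter);
  matrices are functions nat => nat => real with explicit numbers of rows/columns.
  Parameters of the network: W l is the weight matrix of layer l (1 <= l <= L).\<close>

type_synonym vec = "nat \<Rightarrow> real"
type_synonym mat = "nat \<Rightarrow> nat \<Rightarrow> real"
type_synonym params = "nat \<Rightarrow> mat"

definition vnorm :: "nat \<Rightarrow> vec \<Rightarrow> real" where
  "vnorm n v = sqrt (\<Sum>i<n. (v i)\<^sup>2)"

definition mvmul :: "nat \<Rightarrow> mat \<Rightarrow> vec \<Rightarrow> vec" where
  "mvmul n M v = (\<lambda>i. \<Sum>j<n. M i j * v j)"

definition opnorm :: "nat \<Rightarrow> nat \<Rightarrow> mat \<Rightarrow> real" where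
  "opnorm m n M = Sup {vnorm m (mvmul n M v) | v. vnorm n v \<le> 1}"

definition aug :: "nat \<Rightarrow> vec \<Rightarrow> vec" where
  "aug n v = v(n := 1)"

text \<open>Activations a_l (already augmented by the constant coordinate 1, so of length d l + 1):
  a_0 = x, a_l = sigma(W_l a_{l-1}).\<close>
fun act :: "(real \<Rightarrow> real) \<Rightarrow> (nat \<Rightarrow> nat) \<Rightarrow> params \<Rightarrow> vec \<Rightarrow> nat \<Rightarrow> vec" where
  "act \<sigma> d W x 0 = aug (d 0) x"
| "act \<sigma> d W x (Suc l) =
     aug (d (Suc l)) (\<lambda>i. \<sigma> (mvmul (d l + 1) (W (Suc l)) (act \<sigma> d W x l) i))"

definition logits :: "(real \<Rightarrow> real) \<Rightarrow> (nat \<Rightarrow> nat) \<Rightarrow> nat \<Rightarrow> params \<Rightarrow> vec \<Rightarrow> vec" where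
  "logits \<sigma> d L W x = mvmul (d (L - 1) + 1) (W L) (act \<sigma> d W x (L - 1))"

definition softmax :: "nat \<Rightarrow> vec \<Rightarrow> vec" where
  "softmax n z = (\<lambda>i. exp (z i) / (\<Sum>j<n. exp (z j)))"

definition ce :: "nat \<Rightarrow> vec \<Rightarrow> nat \<Rightarrow> real" where
  "ce n z y = - ln (softmax n z y)"

definition loss :: "(real \<Rightarrow> real) \<Rightarrow> (nat \<Rightarrow> nat) \<Rightarrow> nat \<Rightarrow> params \<Rightarrow> vec \<Rightarrow> nat \<Rightarrow> real" where
  "loss \<sigma> d L W x y = ce (d L) (logits \<sigma> d L W x) y"

definition grad_z :: "nat \<Rightarrow> vec \<Rightarrow> nat \<Rightarrow> vec" where
  "grad_z n z y = (\<lambda>i. deriv (\<lambda>s. ce n (z(i := s)) y) (z i))"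

definition upd :: "params \<Rightarrow> nat \<Rightarrow> nat \<Rightarrow> nat \<Rightarrow> real \<Rightarrow> params" where
  "upd W l i j s = W(l := (W l)(i := (W l i)(j := s)))"

definition grad_W :: "(real \<Rightarrow> real) \<Rightarrow> (nat \<Rightarrow> nat) \<Rightarrow> nat \<Rightarrow> vec \<Rightarrow> nat \<Rightarrow> params \<Rightarrow> nat \<Rightarrow> mat" where
  "grad_W \<sigma> d L x y W l = (\<lambda>i j. deriv (\<lambda>s. loss \<sigma> d L (upd W l i j s) x y) (W l i j))"

end

theory Submission
  imports Defs
begin

text \<open>
  Both parts hold pointwise in \<open>t\<close> and follow from two facts about the last layer.
  From \<open>z = W_L a_{L-1}\<close> we get \<open>\<parallel>z\<parallel> \<le> \<parallel>W_L\<parallel> \<parallel>a_{L-1}\<parallel>\<close>, so if \<open>\<parallel>a_{L-1}\<parallel> \<le> C_1\<close> then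
  \<open>\<parallel>W_L\<parallel> \<ge> \<parallel>z\<parallel> / C_1 \<longrightarrow> \<infinity>\<close>. By the chain rule the gradient \<open>(\<nabla>_z \<L>) a_{L-1}\<^sup>T\<close> with respect
  to \<open>W_L\<close> has rank one and operator norm \<open>\<parallel>\<nabla>_z \<L>\<parallel> \<parallel>a_{L-1}\<parallel> \<ge> c \<parallel>a_{L-1}\<parallel>\<close>; if \<open>a_{L-1}\<close> is
  unbounded, it tends to infinity along a subsequence, and so does this gradient.
\<close>

lemma vnorm_eq_L2_set: "vnorm n v = L2_set v {..<n}"
  by (simp add: vnorm_def L2_set_def)

lemma vnorm_nonneg: "0 \<le> vnorm n v"
  by (simp add: vnorm_eq_L2_set)

lemma power2_vnorm: "(vnorm n v)\<^sup>2 = (\<Sum>i<n. (v i)\<^sup>2)"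
  by (simp add: vnorm_def sum_nonneg)

lemma abs_le_vnorm: "j < n \<Longrightarrow> \<bar>v j\<bar> \<le> vnorm n v"
  using member_le_L2_set[of "{..<n}" j "\<lambda>i. \<bar>v i\<bar>"] by (simp add: vnorm_def L2_set_def)

lemma vnorm_mult_left: "vnorm n (\<lambda>i. r * v i) = \<bar>r\<bar> * vnorm n v"
  by (simp add: vnorm_def power_mult_distrib real_sqrt_mult flip: sum_distrib_left)

lemma vnorm_cong: "(\<And>i. i < n \<Longrightarrow> v i = w i) \<Longrightarrow> vnorm n v = vnorm n w"
  by (simp add: vnorm_def)

lemma mvmul_mult_right: "mvmul n M (\<lambda>j. r * v j) = (\<lambda>i. r * mvmul n M v i)"
  by (simp add: mvmul_def sum_distrib_left algebra_simps)

lemma bdd_above_opnorm: "bdd_above {vnorm m (mvmul n M v) | v. vnorm n v \<le> 1}"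
proof -
  have "vnorm m (mvmul n M v) \<le> (\<Sum>i<m. \<Sum>j<n. \<bar>M i j\<bar>)" if v: "vnorm n v \<le> 1" for v
  proof -
    have "vnorm m (mvmul n M v) \<le> (\<Sum>i<m. \<bar>mvmul n M v i\<bar>)"
      by (simp add: vnorm_eq_L2_set L2_set_le_sum_abs)
    also have "\<dots> \<le> (\<Sum>i<m. \<Sum>j<n. \<bar>M i j\<bar>)"
    proof (rule sum_mono)
      fix i
      have "\<bar>mvmul n M v i\<bar> \<le> (\<Sum>j<n. \<bar>M i j * v j\<bar>)"
        unfolding mvmul_def by (rule sum_abs)
      also have "\<dots> \<le> (\<Sum>j<n. \<bar>M i j\<bar>)"
      proof (rule sum_mono)
        fix j assume "j \<in> {..<n}"
        then have "\<bar>v j\<bar> \<le> 1" using abs_le_vnorm[of j n v] v by simp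
        then show "\<bar>M i j * v j\<bar> \<le> \<bar>M i j\<bar>" by (simp add: abs_mult mult_left_le)
      qed
      finally show "\<bar>mvmul n M v i\<bar> \<le> (\<Sum>j<n. \<bar>M i j\<bar>)" .
    qed
    finally show ?thesis .
  qed
  then show ?thesis unfolding bdd_above_def by blast
qed

lemma vnorm_mvmul_le_opnorm: "vnorm n v \<le> 1 \<Longrightarrow> vnorm m (mvmul n M v) \<le> opnorm m n M"
  unfolding opnorm_def by (rule cSup_upper[OF _ bdd_above_opnorm]) blast

lemma opnorm_nonneg: "0 \<le> opnorm m n M"
  by (rule order_trans[OF vnorm_nonneg vnorm_mvmul_le_opnorm[of n "\<lambda>_. 0"]]) (simp add: vnorm_def)

lemma vnorm_mvmul_le: "vnorm m (mvmul n M v) \<le> opnorm m n M * vnorm n v"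
proof (cases "vnorm n v = 0")
  case True
  then have "v j = 0" if "j < n" for j
    using abs_le_vnorm[OF that, of v] by simp
  then have "mvmul n M v = (\<lambda>_. 0)"
    by (simp add: mvmul_def)
  then show ?thesis by (simp add: vnorm_def opnorm_nonneg sum_nonneg)
next
  case False
  define R where "R = vnorm n v"
  have R: "R > 0" using False vnorm_nonneg[of n v] by (simp add: R_def)
  have "vnorm n (\<lambda>j. (1 / R) * v j) = 1"
    using R vnorm_mult_left[of n "1 / R" v] by (simp add: R_def)
  then have "vnorm m (mvmul n M (\<lambda>j. (1 / R) * v j)) \<le> opnorm m n M"
    by (simp add: vnorm_mvmul_le_opnorm)
  then have "vnorm m (mvmul n M v) / R \<le> opnorm m n M"
    using R mvmul_mult_right[of n M "1 / R" v] vnorm_mult_left[of m "1 / R" "mvmul n M v"] by simp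
  then show ?thesis using R by (simp add: R_def field_simps)
qed

lemma vnorm_mult_vnorm_le_opnorm_outer:
  assumes G: "\<And>i j. i < m \<Longrightarrow> j < n \<Longrightarrow> G i j = g i * a j"
  shows "vnorm m g * vnorm n a \<le> opnorm m n G"
proof (cases "vnorm n a = 0")
  case True
  then show ?thesis by (simp add: opnorm_nonneg)
next
  case False
  define R where "R = vnorm n a"
  have R: "R > 0" using False vnorm_nonneg[of n a] by (simp add: R_def)
  have sum_sq: "(\<Sum>j<n. a j * a j) = R * R"
    using power2_vnorm[of n a] by (simp add: R_def power2_eq_square)
  have "mvmul n G (\<lambda>j. (1 / R) * a j) i = R * g i" if "i < m" for i
  proof -
    have "mvmul n G (\<lambda>j. (1 / R) * a j) i = (g i / R) * (\<Sum>j<n. a j * a j)"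
      unfolding mvmul_def sum_distrib_left by (rule sum.cong) (simp_all add: G that)
    then show ?thesis using R by (simp add: sum_sq)
  qed
  then have "vnorm m (mvmul n G (\<lambda>j. (1 / R) * a j)) = R * vnorm m g"
    using R by (simp add: vnorm_cong[of m _ "\<lambda>i. R * g i"] vnorm_mult_left)
  moreover have "vnorm n (\<lambda>j. (1 / R) * a j) = 1"
    using R vnorm_mult_left[of n "1 / R" a] by (simp add: R_def)
  ultimately show ?thesis
    using vnorm_mvmul_le_opnorm[of n "\<lambda>j. (1 / R) * a j" m G] by (simp add: R_def mult.commute)
qed

lemma sum_exp_fun_upd:
  fixes n :: nat
  assumes "i < n"
  shows "(\<Sum>k<n. exp ((z(i := s)) k)) = (\<Sum>k<n. exp (z k)) - exp (z i) + exp s"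
proof -
  have "(\<Sum>k<n. exp ((z(i := s)) k)) = (\<Sum>k<n. exp (z k) + (if k = i then exp s - exp (z i) else 0))"
    by (rule sum.cong) auto
  also have "\<dots> = (\<Sum>k<n. exp (z k)) + (exp s - exp (z i))"
    using assms by (simp add: sum.distrib sum.delta)
  finally show ?thesis by simp
qed

lemma ce_eq_ln_sum_exp:
  assumes "0 < n"
  shows "ce n z y = ln (\<Sum>k<n. exp (z k)) - z y"
proof -
  have "(\<Sum>k<n. exp (z k)) > 0" using assms by (intro sum_pos) auto
  then show ?thesis unfolding ce_def softmax_def by (simp add: ln_div)
qed

lemma has_real_derivative_ce:
  assumes i: "i < n"
  shows "((\<lambda>s. ce n (z(i := s)) y) has_real_derivative
           (softmax n z i - (if i = y then 1 else 0))) (at (z i))"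
proof -
  define A where "A = (\<Sum>k<n. exp (z k))"
  have A: "A > 0" unfolding A_def using i by (intro sum_pos) auto
  have ce: "ce n (z(i := s)) y = ln (A - exp (z i) + exp s) - (if i = y then s else z y)" for s
    using i ce_eq_ln_sum_exp[of n "z(i := s)" y] sum_exp_fun_upd[OF i, of z s] by (simp add: A_def)
  have "((\<lambda>s. ln (A - exp (z i) + exp s) - (if i = y then s else z y)) has_real_derivative
          exp (z i) / A - (if i = y then 1 else 0)) (at (z i))"
    using A by (auto intro!: derivative_eq_intros)
  then show ?thesis by (simp add: ce softmax_def A_def)
qed

lemma grad_z_eq: "i < n \<Longrightarrow> grad_z n z y i = softmax n z i - (if i = y then 1 else 0)"
  unfolding grad_z_def by (rule DERIV_imp_deriv[OF has_real_derivative_ce])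

lemma act_fun_upd: "l < L \<Longrightarrow> act \<sigma> d (W(L := M)) x l = act \<sigma> d W x l"
  by (induction l) auto

lemma logits_upd_last:
  assumes L: "1 \<le> L" and j: "j < d (L - 1) + 1"
  shows "logits \<sigma> d L (upd W L i j s) x =
    (logits \<sigma> d L W x)(i := logits \<sigma> d L W x i + (s - W L i j) * act \<sigma> d W x (L - 1) j)"
proof -
  define n where "n = d (L - 1) + 1"
  define a where "a = act \<sigma> d W x (L - 1)"
  have act: "act \<sigma> d (upd W L i j s) x (L - 1) = a"
    unfolding upd_def a_def using L by (intro act_fun_upd) simp
  have row: "(\<Sum>k<n. ((W L i)(j := s)) k * a k) = (\<Sum>k<n. W L i k * a k) + (s - W L i j) * a j"
  proof -
    have "(\<Sum>k<n. ((W L i)(j := s)) k * a k) =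
          (\<Sum>k<n. W L i k * a k + (if k = j then (s - W L i j) * a j else 0))"
      by (rule sum.cong) (auto simp: algebra_simps)
    also have "\<dots> = (\<Sum>k<n. W L i k * a k) + (s - W L i j) * a j"
      using j by (simp add: sum.distrib n_def)
    finally show ?thesis .
  qed
  show ?thesis
    unfolding logits_def act[unfolded a_def] using row by (auto simp: upd_def mvmul_def n_def a_def)
qed

lemma grad_W_last_layer:
  assumes L: "1 \<le> L" and i: "i < d L" and j: "j < d (L - 1) + 1"
  shows "grad_W \<sigma> d L x y W L i j =
     grad_z (d L) (logits \<sigma> d L W x) y i * act \<sigma> d W x (L - 1) j"
proof -
  define z where "z = logits \<sigma> d L W x"
  define a where "a = act \<sigma> d W x (L - 1) j"
  define w where "w = W L i j"
  have loss: "(\<lambda>s. loss \<sigma> d L (upd W L i j s) x y) = (\<lambda>s. ce (d L) (z(i := s)) y) \<circ> (\<lambda>s. z i + (s - w) * a)"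
    by (auto simp: loss_def logits_upd_last[where L = L and d = d, OF L j] z_def a_def w_def)
  have "((\<lambda>s. ce (d L) (z(i := s)) y) has_real_derivative grad_z (d L) z y i) (at (z i + (w - w) * a))"
    using has_real_derivative_ce[OF i, of z y] by (simp add: grad_z_eq[OF i])
  moreover have "((\<lambda>s. z i + (s - w) * a) has_real_derivative a) (at w)"
    by (auto intro!: derivative_eq_intros)
  ultimately have "((\<lambda>s. loss \<sigma> d L (upd W L i j s) x y) has_real_derivative grad_z (d L) z y i * a) (at w)"
    unfolding loss by (rule DERIV_chain)
  then show ?thesis
    unfolding grad_W_def by (simp add: DERIV_imp_deriv z_def a_def w_def)
qed

lemma vnorm_logits_le:
  "vnorm (d L) (logits \<sigma> d L W x)
     \<le> opnorm (d L) (d (L - 1) + 1) (W L) * vnorm (d (L - 1) + 1) (act \<sigma> d W x (L - 1))"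
  unfolding logits_def by (rule vnorm_mvmul_le)

lemma vnorm_grad_z_mult_le_opnorm_grad_W:
  assumes "1 \<le> L"
  shows "vnorm (d L) (grad_z (d L) (logits \<sigma> d L W x) y) * vnorm (d (L - 1) + 1) (act \<sigma> d W x (L - 1))
           \<le> opnorm (d L) (d (L - 1) + 1) (grad_W \<sigma> d L x y W L)"
  by (rule vnorm_mult_vnorm_le_opnorm_outer) (simp add: grad_W_last_layer[OF assms])

lemma filterlim_at_top_if_le_mult_bounded:
  fixes f g h :: "'a \<Rightarrow> real"
  assumes h: "filterlim h at_top F"
    and le: "\<forall>\<^sub>F t in F. h t \<le> f t * g t"
    and bounded: "\<forall>\<^sub>F t in F. g t \<le> C"
    and nonneg: "\<forall>\<^sub>F t in F. 0 \<le> f t"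
    and C: "C > 0"
  shows "filterlim f at_top F"
proof -
  have "filterlim (\<lambda>t. (1 / C) * h t) at_top F"
    using C h by (intro filterlim_tendsto_pos_mult_at_top[of "\<lambda>_. 1 / C" "1 / C"]) simp_all
  moreover have "\<forall>\<^sub>F t in F. (1 / C) * h t \<le> f t"
    using le bounded nonneg
  proof eventually_elim
    case (elim t)
    have "h t \<le> f t * g t" by (rule elim)
    also have "\<dots> \<le> f t * C" using elim by (intro mult_left_mono) simp_all
    finally show ?case using C by (simp add: field_simps)
  qed
  ultimately show ?thesis by (rule filterlim_at_top_mono)
qed

lemma unbounded_imp_subseq_filterlim_at_top:
  fixes f :: "nat \<Rightarrow> real"
  assumes "\<not> (\<exists>C>0. \<forall>\<^sub>F t in sequentially. f t \<le> C)"
  shows "\<exists>r. strict_mono r \<and> filterlim (f \<circ> r) at_top sequentially"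
proof -
  have frequent: "\<exists>t>N. real k < f t" for k N
  proof (rule ccontr)
    assume none: "\<not> (\<exists>t>N. real k < f t)"
    have "\<forall>\<^sub>F t in sequentially. f t \<le> real k + 1"
    proof (rule eventually_sequentiallyI[of "Suc N"])
      fix t assume "Suc N \<le> t"
      then have "\<not> real k < f t" using none by auto
      then show "f t \<le> real k + 1" by linarith
    qed
    then show False using assms by force
  qed
  obtain r where r: "\<And>k. real k < f (r k) \<and> r k < r (Suc k)"
    using dependent_nat_choice[of "\<lambda>k t. real k < f t" "\<lambda>_ t t'. t < t'"] frequent by metis
  have "strict_mono r"
    using r by (simp add: strict_mono_Suc_iff)
  moreover have "filterlim (f \<circ> r) at_top sequentially"
    using r by (intro filterlim_at_top_mono[OF filterlim_real_sequentially] always_eventually)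
      (auto intro: less_imp_le)
  ultimately show ?thesis by blast
qed

theorem theorem1:
  fixes \<sigma> :: "real \<Rightarrow> real" and d :: "nat \<Rightarrow> nat" and L :: nat
    and x :: vec and y :: nat and Wt :: "nat \<Rightarrow> params" and \<eta> :: "nat \<Rightarrow> real"
    and C\<sigma> c :: real
  assumes L: "L \<ge> 1"
    and y: "y < d L"
    and sigma_diff: "\<And>s. \<sigma> differentiable (at s)"
    and sigma_bound: "\<And>s. \<bar>deriv \<sigma> s\<bar> \<le> C\<sigma>"
    and ascent: "\<And>t. \<eta> t > 0"
    and step: "\<And>t l i j. 1 \<le> l \<Longrightarrow> l \<le> L \<Longrightarrow> i < d l \<Longrightarrow> j < d (l - 1) + 1 \<Longrightarrow>
        Wt (Suc t) l i j = Wt t l i j + \<eta> t * grad_W \<sigma> d L x y (Wt t) l i j"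
    and c_pos: "c > 0"
    and grad_z_bound: "\<forall>\<^sub>F t in sequentially.
        vnorm (d L) (grad_z (d L) (logits \<sigma> d L (Wt t) x) y) \<ge> c"
    and z_unbounded: "filterlim (\<lambda>t. vnorm (d L) (logits \<sigma> d L (Wt t) x)) at_top sequentially"
  shows "((\<exists>C1>0. \<forall>\<^sub>F t in sequentially. vnorm (d (L - 1) + 1) (act \<sigma> d (Wt t) x (L - 1)) \<le> C1)
            \<longrightarrow> filterlim (\<lambda>t. opnorm (d L) (d (L - 1) + 1) (Wt t L)) at_top sequentially)
       \<and> ((\<not> (\<exists>C1>0. \<forall>\<^sub>F t in sequentially. vnorm (d (L - 1) + 1) (act \<sigma> d (Wt t) x (L - 1)) \<le> C1))
            \<longrightarrow> (\<exists>r. strict_mono r \<and>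
                 filterlim (\<lambda>k. opnorm (d L) (d (L - 1) + 1) (grad_W \<sigma> d L x y (Wt (r k)) L))
                   at_top sequentially))"
proof -
  let ?m = "d L" and ?n = "d (L - 1) + 1"
  let ?a = "\<lambda>t. act \<sigma> d (Wt t) x (L - 1)"
  show ?thesis
  proof (intro conjI impI)
    assume "\<exists>C1>0. \<forall>\<^sub>F t in sequentially. vnorm ?n (?a t) \<le> C1"
    then obtain C1 where C1: "C1 > 0" and bounded: "\<forall>\<^sub>F t in sequentially. vnorm ?n (?a t) \<le> C1"
      by blast
    show "filterlim (\<lambda>t. opnorm ?m ?n (Wt t L)) at_top sequentially"
      by (intro filterlim_at_top_if_le_mult_bounded[OF z_unbounded _ bounded _ C1]
          always_eventually allI vnorm_logits_le opnorm_nonneg)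
  next
    assume "\<not> (\<exists>C1>0. \<forall>\<^sub>F t in sequentially. vnorm ?n (?a t) \<le> C1)"
    then obtain r where r: "strict_mono r"
      and a_r: "filterlim (\<lambda>k. vnorm ?n (?a (r k))) at_top sequentially"
      using unbounded_imp_subseq_filterlim_at_top[of "\<lambda>t. vnorm ?n (?a t)"] unfolding comp_def by blast
    have "filterlim (\<lambda>k. c * vnorm ?n (?a (r k))) at_top sequentially"
      using c_pos a_r by (intro filterlim_tendsto_pos_mult_at_top[of "\<lambda>_. c" c]) simp_all
    moreover have "\<forall>\<^sub>F k in sequentially. c * vnorm ?n (?a (r k)) \<le> opnorm ?m ?n (grad_W \<sigma> d L x y (Wt (r k)) L)"
      using eventually_subseq[OF r grad_z_bound]
    proof eventually_elim
      case (elim k)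
      then have "c * vnorm ?n (?a (r k))
          \<le> vnorm ?m (grad_z ?m (logits \<sigma> d L (Wt (r k)) x) y) * vnorm ?n (?a (r k))"
        by (intro mult_right_mono) (simp_all add: vnorm_nonneg)
      also have "\<dots> \<le> opnorm ?m ?n (grad_W \<sigma> d L x y (Wt (r k)) L)"
        by (rule vnorm_grad_z_mult_le_opnorm_grad_W[OF L])
      finally show ?case .
    qed
    ultimately have "filterlim (\<lambda>k. opnorm ?m ?n (grad_W \<sigma> d L x y (Wt (r k)) L)) at_top sequentially"
      by (rule filterlim_at_top_mono)
    with r show "\<exists>r. strict_mono r \<and>
        filterlim (\<lambda>k. opnorm ?m ?n (grad_W \<sigma> d L x y (Wt (r k)) L)) at_top sequentially"
      by blast
  qed
qed

end
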